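(* Let $(G,\sigma)$ and $(H,\tau)$ be signed graphs. Then the circular chromatic number of their Type 1 Cartesian product satisfies $$\chi_c\big((G,\sigma)\square(H,\tau)\big)=\max\{\chi_c(G,\sigma),\chi_c(H,\tau)\}.$$
   Context: A signed graph $(G,\sigma)$ is a finite graph $G$ (multiple edges allowed, no loops) together with a signature $\sigma:E(G)\to\{+1,-1\}$; edges with sign $+1$ are positive, those with sign $-1$ negative. For a real $r\ge 2$, $C^r$ is the circle of circumference $r$ (the interval $[0,r]$ with endpoints identified), $d_{C^r}(x,y)=\min\{|x-y|,\,r-|x-y|\}$, and $\overline{x}=x+r/2 \pmod r$ is the antipodal point of $x$. A circular $r$-coloring of $(G,\sigma)$ is a map $f:V(G)\to C^r$ with $d_{C^r}(f(u),f(v))\ge 1$ for every positive edge $uv$ and $d_{C^r}(f(u),\overline{f(v)})\ge 1$ for every negative edge $uv$. The circular chromatic number $\chi_c(G,\sigma)$ is the infimum of all $r\ge 2$ such that $(G,\sigma)$ has a circular $r$-coloring (assumed finite). The Type 1 Cartesian product $(G,\sigma)\square(H,\tau)$ is the signed graph with vertex set $V(G)\times V(H)$, where $(u,x)(v,y)$ is an edge iff either $u=v$ and $xy\in E(H)$, or $x=y$ and $uv\in E(G)$; its signature $\sigma\square\tau$ gives $(u,x)(v,x)$ the sign $\sigma(uv)$ and $(u,x)(u,y)$ the sign $\tau(xy)$. *)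

theory Defs
  imports Complex_Main
begin

text \<open>A signed multigraph: finite nonempty vertex set, finite edge set (edge identifiers),
  each edge has two distinct endpoints (no loops, parallel edges allowed) and a sign in {1,-1}.\<close>

record ('v, 'e) sgraph =
  verts :: "'v set"
  edges :: "'e set"
  ends  :: "'e \<Rightarrow> 'v \<times> 'v"
  sgn   :: "'e \<Rightarrow> int"

definition signed_graph :: "('v, 'e) sgraph \<Rightarrow> bool" where
  "signed_graph G \<longleftrightarrow>
     finite (verts G) \<and> verts G \<noteq> {} \<and> finite (edges G) \<and>
     (\<forall>e\<in>edges G. fst (ends G e) \<in> verts G \<and> snd (ends G e) \<in> verts G
                   \<and> fst (ends G e) \<noteq> snd (ends G e) \<and> sgn G e \<in> {1, -1})"

text \<open>The circle C^r is represented by the interval [0,r).\<close>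

definition circ_dist :: "real \<Rightarrow> real \<Rightarrow> real \<Rightarrow> real" where
  "circ_dist r x y = min \<bar>x - y\<bar> (r - \<bar>x - y\<bar>)"

definition antipode :: "real \<Rightarrow> real \<Rightarrow> real" where
  "antipode r x = (if x + r / 2 < r then x + r / 2 else x + r / 2 - r)"

definition circular_coloring :: "('v, 'e) sgraph \<Rightarrow> real \<Rightarrow> ('v \<Rightarrow> real) \<Rightarrow> bool" where
  "circular_coloring G r f \<longleftrightarrow>
     (\<forall>v\<in>verts G. 0 \<le> f v \<and> f v < r) \<and>
     (\<forall>e\<in>edges G.
        (sgn G e = 1 \<longrightarrow> circ_dist r (f (fst (ends G e))) (f (snd (ends G e))) \<ge> 1) \<and>
        (sgn G e = -1 \<longrightarrow> circ_dist r (f (fst (ends G e))) (antipode r (f (snd (ends G e)))) \<ge> 1))"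

definition circ_chrom :: "('v, 'e) sgraph \<Rightarrow> real" where
  "circ_chrom G = Inf {r. r \<ge> 2 \<and> (\<exists>f. circular_coloring G r f)}"

definition cart_prod :: "('v, 'e) sgraph \<Rightarrow> ('w, 'f) sgraph \<Rightarrow> ('v \<times> 'w, ('e \<times> 'w) + ('v \<times> 'f)) sgraph" where
  "cart_prod G H =
     \<lparr> verts = verts G \<times> verts H,
       edges = Inl ` (edges G \<times> verts H) \<union> Inr ` (verts G \<times> edges H),
       ends = case_sum (\<lambda>(e, x). ((fst (ends G e), x), (snd (ends G e), x)))
                       (\<lambda>(u, f). ((u, fst (ends H f)), (u, snd (ends H f)))),
       sgn = case_sum (\<lambda>(e, x). sgn G e) (\<lambda>(u, f). sgn H f) \<rparr>"

end

theory Submission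
  imports Defs "HOL-Library.Real_Mod"
begin

text \<open>A circular \<open>r\<close>-colouring of the product restricts on every fibre to \<open>r\<close>-colourings
  of the two factors. Conversely, if \<open>f\<close> and \<open>g\<close> are \<open>r\<close>-colourings of the factors, then
  \<open>(u, x) \<mapsto> f u + g x mod r\<close> colours the product: on each fibre it is a rotation of \<open>f\<close>
  or of \<open>g\<close>, and rotations of the circle are isometries commuting with the antipodal map.
  So the product is \<open>r\<close>-colourable iff both factors are; as colourability is inherited by
  larger circumferences (stretch the colouring), the infima combine to a maximum.\<close>

lemma rmod_add_left: "(x rmod m + y) rmod m = (x + y) rmod m"
  by (metis rmod_add rmod_rmod)

lemma circ_dist_eq_min_rmod:
  assumes "0 \<le> x" "x < r" "0 \<le> y" "y < r"
  shows "circ_dist r x y = min ((x - y) rmod r) ((y - x) rmod r)"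
proof -
  have *: "min (d rmod r) ((- d) rmod r) = min \<bar>d\<bar> (r - \<bar>d\<bar>)" if "\<bar>d\<bar> < r" for d
  proof (cases d "0::real" rule: linorder_cases)
    case less
    have "d rmod r = r + d" using that less by (intro rmod_unique[where n = "-1"]) auto
    then show ?thesis using that less by (simp add: min.commute)
  next
    case greater
    have "(- d) rmod r = r - d" using that greater by (intro rmod_unique[where n = "-1"]) auto
    then show ?thesis using that greater by simp
  qed (use that in simp)
  show ?thesis
    unfolding circ_dist_def using *[of "x - y"] assms by simp
qed

lemma antipode_eq_rmod:
  assumes "0 \<le> y" "y < r"
  shows "antipode r y = (y + r / 2) rmod r"
  using assms unfolding antipode_def
  by (auto intro!: rmod_unique[symmetric, where n = 0] rmod_unique[symmetric, where n = 1])

lemma antipode_range: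
  assumes "0 \<le> y" "y < r"
  shows "0 \<le> antipode r y" "antipode r y < r"
  using assms unfolding antipode_def by auto

lemma circ_dist_rotate:
  assumes "r > 0" "0 \<le> x" "x < r" "0 \<le> y" "y < r"
  shows "circ_dist r ((x + c) rmod r) ((y + c) rmod r) = circ_dist r x y"
proof -
  have "((x + c) rmod r - (y + c) rmod r) rmod r = (x - y) rmod r"
       "((y + c) rmod r - (x + c) rmod r) rmod r = (y - x) rmod r"
    by (simp_all add: rmod_diff)
  then show ?thesis
    using assms by (simp add: circ_dist_eq_min_rmod rmod_nonneg rmod_less)
qed

lemma antipode_rotate:
  assumes "r > 0" "0 \<le> y" "y < r"
  shows "antipode r ((y + c) rmod r) = (antipode r y + c) rmod r"
proof -
  have "antipode r ((y + c) rmod r) = ((y + c) rmod r + r / 2) rmod r"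
    using assms by (simp add: antipode_eq_rmod rmod_nonneg rmod_less)
  also have "\<dots> = ((y + r / 2) rmod r + c) rmod r"
    by (simp only: rmod_add_left) (simp add: add_ac)
  also have "\<dots> = (antipode r y + c) rmod r"
    using assms by (simp add: antipode_eq_rmod)
  finally show ?thesis .
qed

lemma circular_coloring_rotate:
  assumes G: "signed_graph G" and "r > 0" and f: "circular_coloring G r f"
  shows "circular_coloring G r (\<lambda>v. (f v + c) rmod r)"
  unfolding circular_coloring_def
proof (intro conjI ballI impI)
  fix v
  show "0 \<le> (f v + c) rmod r" "(f v + c) rmod r < r"
    using \<open>r > 0\<close> by (simp_all add: rmod_nonneg rmod_less)
next
  fix e assume e: "e \<in> edges G"
  let ?u = "fst (ends G e)" and ?v = "snd (ends G e)"
  have "?u \<in> verts G" "?v \<in> verts G"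
    using G e unfolding signed_graph_def by auto
  then have range: "0 \<le> f ?u" "f ?u < r" "0 \<le> f ?v" "f ?v < r"
    using f unfolding circular_coloring_def by auto
  show "1 \<le> circ_dist r ((f ?u + c) rmod r) ((f ?v + c) rmod r)" if "sgn G e = 1"
    using f e that \<open>r > 0\<close> range
    by (simp add: circ_dist_rotate circular_coloring_def)
  show "1 \<le> circ_dist r ((f ?u + c) rmod r) (antipode r ((f ?v + c) rmod r))" if "sgn G e = -1"
    using f e that \<open>r > 0\<close> range
    by (simp add: antipode_rotate circ_dist_rotate antipode_range circular_coloring_def)
qed

lemma circular_coloring_cart_prod_iff:
  "circular_coloring (cart_prod G H) r F \<longleftrightarrow>
     (\<forall>x\<in>verts H. circular_coloring G r (\<lambda>u. F (u, x))) \<and>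
     (\<forall>u\<in>verts G. circular_coloring H r (\<lambda>x. F (u, x)))"
  unfolding circular_coloring_def cart_prod_def by (simp add: ball_Un) blast

lemma circ_dist_scale:
  assumes "t > 0"
  shows "circ_dist (t * r) (t * x) (t * y) = t * circ_dist r x y"
proof -
  have "\<bar>t * x - t * y\<bar> = t * \<bar>x - y\<bar>"
    using assms by (simp add: abs_mult flip: right_diff_distrib)
  then show ?thesis
    unfolding circ_dist_def using assms by (simp add: min_mult_distrib_left right_diff_distrib)
qed

lemma antipode_scale:
  assumes "t > 0"
  shows "antipode (t * r) (t * y) = t * antipode r y"
proof -
  have "t * y + t * r / 2 = t * (y + r / 2)"
    by (simp add: algebra_simps)
  then have "t * y + t * r / 2 < t * r \<longleftrightarrow> y + r / 2 < r"
    using assms by simp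
  then show ?thesis
    unfolding antipode_def by (simp add: algebra_simps)
qed

lemma circular_coloring_scale:
  assumes "t \<ge> 1" and f: "circular_coloring G r f"
  shows "circular_coloring G (t * r) (\<lambda>v. t * f v)"
  unfolding circular_coloring_def
proof (intro conjI ballI impI)
  fix v assume "v \<in> verts G"
  then show "0 \<le> t * f v" "t * f v < t * r"
    using f \<open>t \<ge> 1\<close> unfolding circular_coloring_def by auto
next
  have stretch: "1 \<le> t * d" if "1 \<le> d" for d :: real
    using that \<open>t \<ge> 1\<close> by (metis mult_mono mult_1 zero_le_one order_trans)
  fix e assume "e \<in> edges G"
  let ?u = "fst (ends G e)" and ?v = "snd (ends G e)"
  show "1 \<le> circ_dist (t * r) (t * f ?u) (t * f ?v)" if "sgn G e = 1"
    using f \<open>e \<in> edges G\<close> that \<open>t \<ge> 1\<close> stretch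
    by (simp add: circ_dist_scale circular_coloring_def)
  show "1 \<le> circ_dist (t * r) (t * f ?u) (antipode (t * r) (t * f ?v))" if "sgn G e = -1"
    using f \<open>e \<in> edges G\<close> that \<open>t \<ge> 1\<close> stretch
    by (simp add: circ_dist_scale antipode_scale circular_coloring_def)
qed

text \<open>Number the vertices injectively by \<open>0, \<dots>, n - 1\<close> on a circle of circumference \<open>4 n\<close>:
  distinct labels are at distance in \<open>[1, n)\<close>, and every antipode lies at distance more than \<open>n\<close>
  from every label.\<close>

lemma ex_circular_coloring:
  assumes G: "signed_graph G"
  shows "\<exists>f. circular_coloring G (4 * real (card (verts G))) f"
proof -
  let ?n = "real (card (verts G))"
  have fin: "finite (verts G)" and n: "?n \<ge> 1"
    using G unfolding signed_graph_def by (auto simp: Suc_leI card_gt_0_iff)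
  obtain h where h: "bij_betw h (verts G) {0..<card (verts G)}"
    using ex_bij_betw_finite_nat[OF fin] by blast
  define f where "f v = real (h v)" for v
  have range: "0 \<le> f v" "f v < ?n" if "v \<in> verts G" for v
    using h that unfolding f_def bij_betw_def by auto
  have apart: "1 \<le> \<bar>f u - f v\<bar>" if "u \<in> verts G" "v \<in> verts G" "u \<noteq> v" for u v
  proof -
    have "h u \<noteq> h v"
      using h that unfolding bij_betw_def inj_on_def by blast
    then show ?thesis
      unfolding f_def by linarith
  qed
  have "circular_coloring G (4 * ?n) f"
    unfolding circular_coloring_def
  proof (intro conjI ballI impI)
    fix v assume "v \<in> verts G"
    then show "0 \<le> f v" "f v < 4 * ?n"
      using range[of v] by auto
  next
    fix e assume "e \<in> edges G"
    let ?u = "fst (ends G e)" and ?v = "snd (ends G e)"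
    have uv: "?u \<in> verts G" "?v \<in> verts G" "?u \<noteq> ?v"
      using G \<open>e \<in> edges G\<close> unfolding signed_graph_def by auto
    show "1 \<le> circ_dist (4 * ?n) (f ?u) (f ?v)"
      using apart[OF uv] range[OF uv(1)] range[OF uv(2)] unfolding circ_dist_def by auto
    have "antipode (4 * ?n) (f ?v) = f ?v + 2 * ?n"
      using range[OF uv(2)] unfolding antipode_def by auto
    then show "1 \<le> circ_dist (4 * ?n) (f ?u) (antipode (4 * ?n) (f ?v))"
      using range[OF uv(1)] range[OF uv(2)] unfolding circ_dist_def
      by (simp add: abs_if) (use n in linarith)
  qed
  then show ?thesis by blast
qed

definition admissible_circumferences :: "('v, 'e) sgraph \<Rightarrow> real set" where
  "admissible_circumferences G = {r. r \<ge> 2 \<and> (\<exists>f. circular_coloring G r f)}"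

lemma bdd_below_admissible_circumferences: "bdd_below (admissible_circumferences G)"
  unfolding admissible_circumferences_def by (rule bdd_belowI[of _ 2]) auto

lemma circ_chrom_eq_Inf_admissible_circumferences:
  "circ_chrom G = Inf (admissible_circumferences G)"
  unfolding circ_chrom_def admissible_circumferences_def ..

lemma admissible_circumferences_upward_closed:
  assumes "r \<in> admissible_circumferences G" "r \<le> s"
  shows "s \<in> admissible_circumferences G"
proof -
  obtain f where f: "circular_coloring G r f" and "r \<ge> 2"
    using assms(1) unfolding admissible_circumferences_def by blast
  have "s = (s / r) * r" "s / r \<ge> 1"
    using \<open>r \<ge> 2\<close> \<open>r \<le> s\<close> by auto
  then have "circular_coloring G s (\<lambda>v. (s / r) * f v)"
    using circular_coloring_scale[OF _ f] by metis
  then show ?thesis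
    using \<open>r \<ge> 2\<close> \<open>r \<le> s\<close> unfolding admissible_circumferences_def by auto
qed

lemma admissible_circumferences_nonempty:
  assumes "signed_graph G"
  shows "admissible_circumferences G \<noteq> {}"
proof -
  have "card (verts G) \<ge> 1"
    using assms unfolding signed_graph_def by (auto simp: Suc_leI card_gt_0_iff)
  then show ?thesis
    using ex_circular_coloring[OF assms] unfolding admissible_circumferences_def by force
qed

lemma admissible_circumferences_cart_prod:
  assumes G: "signed_graph G" and H: "signed_graph H"
  shows "admissible_circumferences (cart_prod G H) =
           admissible_circumferences G \<inter> admissible_circumferences H"
proof (intro equalityI subsetI)
  fix r assume "r \<in> admissible_circumferences (cart_prod G H)"
  then obtain F where F: "circular_coloring (cart_prod G H) r F" and "r \<ge> 2"
    unfolding admissible_circumferences_def by blast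
  obtain x0 u0 where "x0 \<in> verts H" "u0 \<in> verts G"
    using G H unfolding signed_graph_def by auto
  then show "r \<in> admissible_circumferences G \<inter> admissible_circumferences H"
    using F \<open>r \<ge> 2\<close> unfolding circular_coloring_cart_prod_iff admissible_circumferences_def
    by blast
next
  fix r assume "r \<in> admissible_circumferences G \<inter> admissible_circumferences H"
  then obtain f g where f: "circular_coloring G r f" and g: "circular_coloring H r g"
    and "r \<ge> 2"
    unfolding admissible_circumferences_def by blast
  have "r > 0"
    using \<open>r \<ge> 2\<close> by simp
  have "circular_coloring G r (\<lambda>u. (f u + g x) rmod r)" for x
    using circular_coloring_rotate[OF G \<open>r > 0\<close> f] .
  moreover have "circular_coloring H r (\<lambda>x. (f u + g x) rmod r)" for u
    using circular_coloring_rotate[OF H \<open>r > 0\<close> g, of "f u"] by (simp add: add.commute)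
  ultimately have "circular_coloring (cart_prod G H) r (\<lambda>(u, x). (f u + g x) rmod r)"
    unfolding circular_coloring_cart_prod_iff by simp
  then show "r \<in> admissible_circumferences (cart_prod G H)"
    using \<open>r \<ge> 2\<close> unfolding admissible_circumferences_def by blast
qed

lemma cInf_Int_upward_closed:
  fixes A B :: "'a :: {conditionally_complete_linorder, dense_linorder} set"
  assumes "A \<noteq> {}" "B \<noteq> {}" "bdd_below A" "bdd_below B"
    and up_A: "\<And>a b. a \<in> A \<Longrightarrow> a \<le> b \<Longrightarrow> b \<in> A"
    and up_B: "\<And>a b. a \<in> B \<Longrightarrow> a \<le> b \<Longrightarrow> b \<in> B"
  shows "Inf (A \<inter> B) = max (Inf A) (Inf B)"
proof (rule antisym)
  obtain a b where "a \<in> A" "b \<in> B"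
    using assms(1,2) by blast
  then have "max a b \<in> A \<inter> B"
    using up_A up_B by (simp add: max_def)
  then have AB: "A \<inter> B \<noteq> {}"
    by blast
  show "max (Inf A) (Inf B) \<le> Inf (A \<inter> B)"
    using cInf_superset_mono[OF AB \<open>bdd_below A\<close>] cInf_superset_mono[OF AB \<open>bdd_below B\<close>]
    by simp
  show "Inf (A \<inter> B) \<le> max (Inf A) (Inf B)"
  proof (rule dense_ge)
    fix y assume "max (Inf A) (Inf B) < y"
    then obtain a b where "a \<in> A" "a < y" "b \<in> B" "b < y"
      using cInf_less_iff[OF assms(1,3)] cInf_less_iff[OF assms(2,4)] by auto
    then have "y \<in> A \<inter> B"
      using up_A up_B by auto
    then show "Inf (A \<inter> B) \<le> y"
      using \<open>bdd_below A\<close> by (simp add: cInf_lower bdd_below_Int1)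
  qed
qed

theorem theorem1:
  fixes G :: "('v, 'e) sgraph" and H :: "('w, 'f) sgraph"
  assumes "signed_graph G" and "signed_graph H"
  shows "circ_chrom (cart_prod G H) = max (circ_chrom G) (circ_chrom H)"
proof -
  have "Inf (admissible_circumferences (cart_prod G H)) =
          max (Inf (admissible_circumferences G)) (Inf (admissible_circumferences H))"
    unfolding admissible_circumferences_cart_prod[OF assms]
    by (intro cInf_Int_upward_closed admissible_circumferences_nonempty assms
          bdd_below_admissible_circumferences)
       (auto intro: admissible_circumferences_upward_closed)
  then show ?thesis
    by (simp add: circ_chrom_eq_Inf_admissible_circumferences)
qed

end
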